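(* Let $X$ be an $n$-dimensional projective space over a field and $K$ a $k$-dimensional subspace of $X$ with $-1\le k\le n-3$. Let $\mathcal B_K\subseteq\mathrm{Gr}_1(K)$ be a $(2,1)$-blocking set in $K$, let $\mathcal B_{X/K}$ be a $(2,1)$-blocking set in $X/K$, and for every point $P\in\mathrm{Gr}_0(K)$ let $\mathcal B_{X/P}$ be a $(1,0)$-blocking set in $X/P$ (i.e. a set of lines of $X$ through $P$ such that every plane of $X$ through $P$ contains one of them). Assume that for every line $L\in\mathrm{Gr}_1(K)\setminus\mathcal B_K$, the set $\bigcup_{P\in\mathrm{Gr}_0(L)}\bigl(\mathcal B_{X/P}\setminus\mathrm{Gr}_0(K/P)\bigr)$ blocks $\mathcal S_L:=\{S\in\mathrm{Gr}_2(X): K\cap S=L\}$, i.e. every $S\in\mathcal S_L$ contains one of its elements. Then the disjoint union $$\mathcal B:=\{T\in\mathrm{Gr}_1(X):\langle K,T\rangle\in\mathcal B_{X/K}\}\ \cup\ \bigcup_{P\in\mathrm{Gr}_0(K)}\bigl(\mathcal B_{X/P}\setminus\mathrm{Gr}_0(K/P)\bigr)\ \cup\ \mathcal B_K$$ is a $(2,1)$-blocking set in $X$.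
   Context: Projective dimension is used; $\mathrm{Gr}_d(Y)$ is the set of $d$-dimensional subspaces of $Y$. For a $k$-dimensional subspace $K$ of $X$, the quotient $X/K$ is the projective space of dimension $\dim X-k-1$ whose $r$-dimensional subspaces are the $(r+k+1)$-dimensional subspaces of $X$ containing $K$; $\langle K,T\rangle$ is regarded as an element of $X/K$. For a point $P$ of $K$, $K/P$ is the quotient of $K$ by $P$, so $\mathrm{Gr}_0(K/P)$ is the set of lines of $K$ through $P$ and $\mathrm{Gr}_0(X/P)$ the set of lines of $X$ through $P$. For $-1\le t\le s$, an $(s,t)$-blocking set in a projective space $Y$ is a set of $t$-dimensional subspaces of $Y$ such that every $s$-dimensional subspace of $Y$ contains at least one of them. *)

theory Defs
  imports Complex_Main
begin

text \<open>Projective subspaces are vector subspaces; projective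
dimension = vector dimension - 1 (so the zero subspace has dimension -1).\<close>

definition pdim :: "('a::field \<Rightarrow> 'v::ab_group_add \<Rightarrow> 'v) \<Rightarrow> 'v set \<Rightarrow> int" where
  "pdim scale U = int (vector_space.dim scale U) - 1"

definition Gr :: "('a::field \<Rightarrow> 'v::ab_group_add \<Rightarrow> 'v) \<Rightarrow> 'v set \<Rightarrow> int \<Rightarrow> 'v set set" where
  "Gr scale Y d = {U. module.subspace scale U \<and> U \<subseteq> Y \<and> pdim scale U = d}"

text \<open>r-dimensional subspaces of the quotient Y/K: the (r+k+1)-dimensional subspaces of Y
containing K, where k = pdim K.\<close>
definition qGr :: "('a::field \<Rightarrow> 'v::ab_group_add \<Rightarrow> 'v) \<Rightarrow> 'v set \<Rightarrow> 'v set \<Rightarrow> int \<Rightarrow> 'v set set" where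
  "qGr scale Y K r = {U \<in> Gr scale Y (r + pdim scale K + 1). K \<subseteq> U}"

text \<open>(s,t)-blocking set in a projective space whose d-dimensional subspaces are G d
(inclusion being set inclusion).\<close>
definition blocking_set :: "(int \<Rightarrow> 'b set set) \<Rightarrow> int \<Rightarrow> int \<Rightarrow> 'b set set \<Rightarrow> bool" where
  "blocking_set G s t B \<longleftrightarrow> B \<subseteq> G t \<and> (\<forall>S \<in> G s. \<exists>T \<in> B. T \<subseteq> S)"

definition join :: "('a::field \<Rightarrow> 'v::ab_group_add \<Rightarrow> 'v) \<Rightarrow> 'v set \<Rightarrow> 'v set \<Rightarrow> 'v set" where
  "join scale K T = module.span scale (K \<union> T)"

end

theory Submission
  imports Defs
begin

text \<open>A plane S of X is blocked according to how it meets K. If S \<subseteq> K, by B_K; if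
K \<inter> S is a line L, by L itself or by the hypothesis on L; if K \<inter> S is a point P, by the
line of B_X/P inside S, which cannot lie in K. If S is skew to K, then \<langle>K,S\<rangle> is a plane
of X/K and so contains a line U of B_X/K, and Grassmann's formula shows that T = U \<inter> S is a
line with \<langle>K,T\<rangle> = U. The three families are disjoint because K \<inter> T is trivial, a point
or T itself for their members. The argument works with vector dimensions (one more than the
projective ones) inside the finite-dimensional space X, where Grassmann's formula holds.\<close>

context vector_space
begin

lemma dim_subset_finite:
  assumes "finite W" "V \<subseteq> span W" "U \<subseteq> V"
  shows "dim U \<le> dim V"
proof -
  obtain B where B: "B \<subseteq> V" "independent B" "V \<subseteq> span B" "card B = dim V"
    using basis_exists by blast
  have "finite B"
    using independent_span_bound[OF assms(1) B(2)] B(1) assms(2) by blast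
  then show ?thesis
    using dim_le_card[of U B] B(3,4) assms(3) by auto
qed

lemma subspace_eq_if_dim_le_finite:
  assumes "finite W" "V \<subseteq> span W" "subspace U" "U \<subseteq> V" "dim V \<le> dim U"
  shows "U = V"
proof -
  obtain B where B: "B \<subseteq> U" "independent B" "U \<subseteq> span B" "card B = dim U"
    using basis_exists by blast
  obtain C where C: "B \<subseteq> C" "C \<subseteq> V" "independent C" "V \<subseteq> span C"
    using maximal_independent_subset_extend[of B V] B(1,2) assms(4) by blast
  have "finite C"
    using independent_span_bound[OF assms(1) C(3)] C(2) assms(2) by blast
  moreover have "card C = dim V"
    using basis_card_eq_dim C(2-4) by blast
  ultimately have "B = C"
    using card_subset_eq[OF _ C(1)] card_mono[OF _ C(1)] B(4) assms(5) by force
  then have "V \<subseteq> U"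
    using C(4) span_minimal[OF B(1) assms(3)] by blast
  with assms(4) show ?thesis by blast
qed

lemma independent_Un_iff_span_Int:
  assumes A: "independent A" and B: "independent B" and disj: "A \<inter> B = {}"
  shows "independent (A \<union> B) \<longleftrightarrow> span A \<inter> span B = {0}"
proof
  assume indep: "independent (A \<union> B)"
  show "span A \<inter> span B = {0}"
  proof (intro subset_antisym subsetI)
    fix x assume x: "x \<in> span A \<inter> span B"
    have "representation A x = representation B x"
      using representation_extend[OF indep, of x A] representation_extend[OF indep, of x B] x
      by auto
    then have "representation A x = (\<lambda>_. 0)"
      using representation_ne_zero[of A x] representation_ne_zero[of B x] disj by fastforce
    then show "x \<in> {0}"
      using sum_nonzero_representation_eq[OF A, of x] x by simp
  qed (simp add: span_zero)
next
  have not_in_span: "a \<notin> span (A \<union> B - {a})"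
    if "a \<in> A" "independent A" "span A \<inter> span B = {0}" for a A B
  proof
    assume "a \<in> span (A \<union> B - {a})"
    then obtain x y where xy: "a = x + y" "x \<in> span (A - {a})" "y \<in> span B"
      using span_Un[of "A - {a}" "B - {a}"] span_mono[of "B - {a}" B]
      by (auto simp: Un_Diff)
    have "y = a - x" using xy(1) by (simp add: algebra_simps)
    then have "y \<in> span A"
      using span_diff[OF span_base[OF that(1)]] span_mono[of "A - {a}" A] xy(2) by auto
    then have "y = 0" using xy(3) that(3) by blast
    then show False
      using xy that(1,2) by (auto simp: dependent_def)
  qed
  assume "span A \<inter> span B = {0}"
  then show "independent (A \<union> B)"
    using not_in_span[of _ A B] not_in_span[of _ B A] A B
    by (auto simp: dependent_def Int_commute Un_commute)
qed

lemma independent_Un_Diff_common_basis: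
  assumes "subspace S" "subspace T" "S \<inter> T \<subseteq> span I"
    and C: "C \<subseteq> S" "independent C" and D: "I \<subseteq> D" "D \<subseteq> T" "independent D"
  shows "independent (C \<union> (D - I))" and "C \<inter> (D - I) = {}"
proof -
  have "independent I" "independent (D - I)"
    using independent_mono[OF D(3)] D(1) by blast+
  moreover have "I \<inter> (D - I) = {}" "I \<union> (D - I) = D"
    using D(1) by blast+
  ultimately have "span I \<inter> span (D - I) = {0}"
    using independent_Un_iff_span_Int[of I "D - I"] D(3) by simp
  moreover have "span C \<inter> span (D - I) \<subseteq> span I"
    using span_minimal[OF C(1) \<open>subspace S\<close>] span_minimal[of "D - I" T] D(2) \<open>subspace T\<close> assms(3)
    by blast
  ultimately have span_Int: "span C \<inter> span (D - I) = {0}"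
    using span_zero by blast
  show disj: "C \<inter> (D - I) = {}"
  proof (rule equals0I)
    fix x assume "x \<in> C \<inter> (D - I)"
    then have "x \<in> span C \<inter> span (D - I)"
      using span_base by blast
    then have "x = 0"
      using span_Int by blast
    with \<open>x \<in> C \<inter> (D - I)\<close> show False
      using C(2) dependent_zero by blast
  qed
  show "independent (C \<union> (D - I))"
    using independent_Un_iff_span_Int[OF C(2) \<open>independent (D - I)\<close> disj] span_Int by blast
qed

lemma dim_span_Un_Int_finite:
  assumes W: "finite W" "S \<subseteq> span W" "T \<subseteq> span W" and "subspace S" "subspace T"
  shows "dim (span (S \<union> T)) + dim (S \<inter> T) = dim S + dim T"
proof -
  obtain I where I: "I \<subseteq> S \<inter> T" "independent I" "S \<inter> T \<subseteq> span I" "card I = dim (S \<inter> T)"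
    using basis_exists by blast
  obtain C where C: "I \<subseteq> C" "C \<subseteq> S" "independent C" "S \<subseteq> span C"
    using maximal_independent_subset_extend[of I S] I(1,2) by blast
  obtain D where D: "I \<subseteq> D" "D \<subseteq> T" "independent D" "T \<subseteq> span D"
    using maximal_independent_subset_extend[of I T] I(1,2) by blast
  have "finite C" "finite D"
    using independent_span_bound[OF W(1)] C(2,3) D(2,3) W(2,3) by (meson order_trans)+
  note indep = independent_Un_Diff_common_basis[OF assms(4,5) I(3) C(2,3) D(1-3)]
  have "span (C \<union> (D - I)) = span (S \<union> T)"
  proof (rule span_eq[THEN iffD2], rule conjI)
    show "C \<union> (D - I) \<subseteq> span (S \<union> T)"
      using C(2) D(2) span_superset[of "S \<union> T"] by blast
    have "D \<subseteq> C \<union> (D - I)"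
      using C(1) by blast
    then have "S \<subseteq> span (C \<union> (D - I))" "T \<subseteq> span (C \<union> (D - I))"
      using C(4) D(4) span_mono[of C "C \<union> (D - I)"] span_mono[of D "C \<union> (D - I)"] by blast+
    then show "S \<union> T \<subseteq> span (C \<union> (D - I))" by blast
  qed
  then have "dim (span (S \<union> T)) = card C + card (D - I)"
    using dim_eq_card[OF _ indep(1)] card_Un_disjoint[OF \<open>finite C\<close> _ indep(2)] \<open>finite D\<close>
    by (simp add: span_span)
  moreover have "card (D - I) = card D - card I" "card I \<le> card D"
    using card_Diff_subset[OF finite_subset[OF D(1)] D(1)] card_mono[OF _ D(1)] \<open>finite D\<close>
    by auto
  moreover have "dim S = card C" "dim T = card D"
    using basis_card_eq_dim C(2-4) D(2-4) by auto
  ultimately show ?thesis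
    using I(4) by linarith
qed

lemma finite_span_if_dim_neq_0: "dim V \<noteq> 0 \<Longrightarrow> \<exists>W. finite W \<and> V \<subseteq> span W"
  using basis_exists[of V] card.infinite by metis

lemma mem_Gr_iff: "U \<in> Gr scale Y d \<longleftrightarrow> subspace U \<and> U \<subseteq> Y \<and> int (dim U) = d + 1"
  by (auto simp: Gr_def pdim_def)

lemma mem_qGr_iff:
  "U \<in> qGr scale Y P r \<longleftrightarrow> subspace U \<and> U \<subseteq> Y \<and> P \<subseteq> U \<and> int (dim U) = r + 1 + int (dim P)"
  by (auto simp: qGr_def mem_Gr_iff pdim_def)

lemma Gr_mono: "Y \<subseteq> Z \<Longrightarrow> Gr scale Y d \<subseteq> Gr scale Z d"
  unfolding Gr_def by blast

lemma qGr_subset_Gr: "qGr scale Y P r \<subseteq> Gr scale Y (r + pdim scale P + 1)"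
  by (simp add: qGr_def)

lemma subspace_join: "subspace (join scale S T)"
  by (simp add: join_def)

lemma subset_join: "S \<subseteq> join scale S T" "T \<subseteq> join scale S T"
  by (auto simp: join_def intro: span_base)

lemma join_subset: "S \<subseteq> U \<Longrightarrow> T \<subseteq> U \<Longrightarrow> subspace U \<Longrightarrow> join scale S T \<subseteq> U"
  by (simp add: join_def span_minimal)

end

locale projective_space = vector_space +
  fixes X :: "'b set"
  assumes subspace_X: "subspace X"
    and finite_span_X: "\<exists>W. finite W \<and> X \<subseteq> span W"
begin

lemma dim_subset: "V \<subseteq> X \<Longrightarrow> U \<subseteq> V \<Longrightarrow> dim U \<le> dim V"
  using finite_span_X dim_subset_finite[of _ V U] by (meson order_trans)

lemma subspace_eq_if_dim_le: "V \<subseteq> X \<Longrightarrow> subspace U \<Longrightarrow> U \<subseteq> V \<Longrightarrow> dim V \<le> dim U \<Longrightarrow> U = V"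
  using finite_span_X subspace_eq_if_dim_le_finite[of _ V U] by (meson order_trans)

lemma dim_join_Int:
  "subspace S \<Longrightarrow> subspace T \<Longrightarrow> S \<subseteq> X \<Longrightarrow> T \<subseteq> X \<Longrightarrow>
    dim (join scale S T) + dim (S \<inter> T) = dim S + dim T"
  using finite_span_X dim_span_Un_Int_finite[of _ S T] unfolding join_def by (meson order_trans)

lemma join_subset_X: "S \<subseteq> X \<Longrightarrow> T \<subseteq> X \<Longrightarrow> join scale S T \<subseteq> X"
  by (simp add: join_subset subspace_X)

lemma dim_Int_eq_0_if_join_qGr:
  assumes K: "subspace K" "K \<subseteq> X" and T: "T \<in> Gr scale X 1"
    and join: "join scale K T \<in> qGr scale X K 1"
  shows "dim (K \<inter> T) = 0"
proof -
  have T': "subspace T" "T \<subseteq> X" "dim T = 2"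
    using T by (auto simp: mem_Gr_iff)
  have "dim (join scale K T) = dim K + 2"
    using join by (auto simp: mem_qGr_iff)
  then show ?thesis
    using dim_join_Int[OF K(1) T'(1) K(2) T'(2)] T'(3) by linarith
qed

lemma Int_eq_point_if_qGr_diff:
  assumes K: "subspace K" "K \<subseteq> X" and P: "P \<in> Gr scale K 0"
    and T: "T \<in> qGr scale X P 0 - qGr scale K P 0"
  shows "K \<inter> T = P"
proof -
  have P': "subspace P" "P \<subseteq> K" "dim P = 1"
    using P by (simp_all add: mem_Gr_iff)
  have T': "subspace T" "T \<subseteq> X" "P \<subseteq> T" "dim T = 2"
    using T P'(3) by (simp_all add: mem_qGr_iff)
  have "\<not> T \<subseteq> K"
    using T T' P'(3) by (simp add: mem_qGr_iff)
  have KT: "subspace (K \<inter> T)" "K \<inter> T \<subseteq> X" "P \<subseteq> K \<inter> T"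
    using K T' P'(2) subspace_inter by auto
  have "dim (K \<inter> T) < dim T"
  proof (rule ccontr)
    assume "\<not> dim (K \<inter> T) < dim T"
    then have "K \<inter> T = T"
      using subspace_eq_if_dim_le[OF T'(2) KT(1)] by simp
    with \<open>\<not> T \<subseteq> K\<close> show False
      by blast
  qed
  then show ?thesis
    using subspace_eq_if_dim_le[OF KT(2) P'(1) KT(3)] P'(3) T'(4) by simp
qed

lemma plane_meeting_in_point_contains_line:
  assumes K: "subspace K" "K \<subseteq> X" and S: "S \<in> Gr scale X 2" and P: "K \<inter> S \<in> Gr scale K 0"
    and B: "blocking_set (qGr scale X (K \<inter> S)) 1 0 B"
  shows "\<exists>T \<in> B - qGr scale K (K \<inter> S) 0. T \<subseteq> S"
proof -
  have "S \<in> qGr scale X (K \<inter> S) 1"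
    using S P by (auto simp: mem_Gr_iff mem_qGr_iff)
  then obtain T where T: "T \<in> B" "T \<subseteq> S"
    using B by (auto simp: blocking_set_def)
  then have "T \<in> qGr scale X (K \<inter> S) 0"
    using B by (auto simp: blocking_set_def)
  then have "dim T = 2"
    using P by (auto simp: mem_qGr_iff mem_Gr_iff)
  moreover have "dim (K \<inter> S) = 1"
    using P by (auto simp: mem_Gr_iff)
  ultimately have "\<not> T \<subseteq> K"
    using dim_subset[of "K \<inter> S" T] K(2) T(2) by auto
  then have "T \<notin> qGr scale K (K \<inter> S) 0"
    by (simp add: mem_qGr_iff)
  with T show ?thesis
    by blast
qed

lemma skew_plane_contains_line:
  assumes K: "subspace K" "K \<subseteq> X" and S: "S \<in> Gr scale X 2" and skew: "dim (K \<inter> S) = 0"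
    and B: "blocking_set (qGr scale X K) 2 1 B"
  shows "\<exists>T \<in> Gr scale X 1. join scale K T \<in> B \<and> T \<subseteq> S"
proof -
  have S': "subspace S" "S \<subseteq> X" "dim S = 3"
    using S by (auto simp: mem_Gr_iff)
  define J where "J = join scale K S"
  have J: "subspace J" "J \<subseteq> X" "K \<subseteq> J" "S \<subseteq> J"
    using subspace_join subset_join join_subset_X K(2) S'(2) by (auto simp: J_def)
  have dim_J: "dim J = dim K + 3"
    using dim_join_Int[OF K(1) S'(1) K(2) S'(2)] skew S'(3) by (simp add: J_def)
  then have "J \<in> qGr scale X K 2"
    using J by (simp add: mem_qGr_iff)
  then obtain U where U: "U \<in> B" "U \<subseteq> J"
    using B by (auto simp: blocking_set_def)
  then have "U \<in> qGr scale X K 1"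
    using B by (auto simp: blocking_set_def)
  then have U': "subspace U" "U \<subseteq> X" "K \<subseteq> U" "dim U = dim K + 2"
    by (auto simp: mem_qGr_iff)
  define T where "T = U \<inter> S"
  have T': "subspace T" "T \<subseteq> X" "T \<subseteq> S" "T \<subseteq> U"
    using U' S' subspace_inter by (auto simp: T_def)
  have "dim (join scale U S) \<le> dim J"
    using dim_subset[OF J(2) join_subset[OF U(2) J(4) J(1)]] .
  then have "2 \<le> dim T"
    using dim_join_Int[OF U'(1) S'(1) U'(2) S'(2)] dim_J U'(4) S'(3) by (simp add: T_def)
  have "dim (K \<inter> T) = 0"
    using dim_subset[of "K \<inter> S" "K \<inter> T"] skew T'(3) K(2) by auto
  then have "dim (join scale K T) = dim K + dim T"
    using dim_join_Int[OF K(1) T'(1) K(2) T'(2)] by simp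
  moreover have KT_U: "join scale K T \<subseteq> U"
    using join_subset[OF U'(3) T'(4) U'(1)] .
  ultimately have "dim T = 2" "join scale K T = U"
    using dim_subset[OF U'(2) KT_U] subspace_eq_if_dim_le[OF U'(2) subspace_join KT_U]
      \<open>2 \<le> dim T\<close> U'(4) by auto
  then show ?thesis
    using T' U(1) by (auto simp: mem_Gr_iff)
qed

lemma plane_meeting_in_line_contains_line:
  assumes S: "S \<in> Gr scale X 2" and L: "K \<inter> S \<in> Gr scale K 1"
    and hyp: "\<forall>L \<in> Gr scale K 1 - B_K. \<forall>S \<in> Gr scale X 2. K \<inter> S = L \<longrightarrow>
               (\<exists>T \<in> (\<Union>P \<in> Gr scale L 0. B_XP P - qGr scale K P 0). T \<subseteq> S)"
  shows "\<exists>T \<in> (\<Union>P \<in> Gr scale K 0. B_XP P - qGr scale K P 0) \<union> B_K. T \<subseteq> S"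
proof (cases "K \<inter> S \<in> B_K")
  case False
  with L have "K \<inter> S \<in> Gr scale K 1 - B_K"
    by blast
  then obtain P T where "P \<in> Gr scale (K \<inter> S) 0" "T \<in> B_XP P - qGr scale K P 0" "T \<subseteq> S"
    using hyp[rule_format, OF _ S refl] by blast
  moreover have "P \<in> Gr scale K 0"
    using Gr_mono[OF Int_lower1] \<open>P \<in> Gr scale (K \<inter> S) 0\<close> by blast
  ultimately show ?thesis
    by blast
qed blast

lemma blocking_set_construction_subset:
  assumes "K \<subseteq> X"
    and BK: "blocking_set (Gr scale K) 2 1 B_K"
    and BXP: "\<forall>P \<in> Gr scale K 0. blocking_set (qGr scale X P) 1 0 (B_XP P)"
  shows "{T \<in> Gr scale X 1. join scale K T \<in> B_XK} \<union>
           (\<Union>P \<in> Gr scale K 0. B_XP P - qGr scale K P 0) \<union> B_K \<subseteq> Gr scale X 1"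
proof -
  have "B_XP P \<subseteq> Gr scale X 1" if "P \<in> Gr scale K 0" for P
  proof -
    have "B_XP P \<subseteq> qGr scale X P 0"
      using that BXP by (simp add: blocking_set_def)
    moreover have "pdim scale P = 0"
      using that by (simp add: Gr_def)
    ultimately show ?thesis
      using qGr_subset_Gr[of X P 0] by simp
  qed
  moreover have "B_K \<subseteq> Gr scale X 1"
    using BK Gr_mono[OF \<open>K \<subseteq> X\<close>] by (auto simp: blocking_set_def)
  ultimately show ?thesis
    by blast
qed

lemma plane_contains_construction_line:
  assumes K: "subspace K" "K \<subseteq> X" and S: "S \<in> Gr scale X 2"
    and BK: "blocking_set (Gr scale K) 2 1 B_K"
    and BXK: "blocking_set (qGr scale X K) 2 1 B_XK"
    and BXP: "\<forall>P \<in> Gr scale K 0. blocking_set (qGr scale X P) 1 0 (B_XP P)"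
    and hyp: "\<forall>L \<in> Gr scale K 1 - B_K. \<forall>S \<in> Gr scale X 2. K \<inter> S = L \<longrightarrow>
               (\<exists>T \<in> (\<Union>P \<in> Gr scale L 0. B_XP P - qGr scale K P 0). T \<subseteq> S)"
  shows "\<exists>T \<in> {T \<in> Gr scale X 1. join scale K T \<in> B_XK} \<union>
             (\<Union>P \<in> Gr scale K 0. B_XP P - qGr scale K P 0) \<union> B_K. T \<subseteq> S"
proof -
  have S': "subspace S" "S \<subseteq> X" "dim S = 3"
    using S by (simp_all add: mem_Gr_iff)
  have KS: "subspace (K \<inter> S)" "K \<inter> S \<subseteq> K"
    using K(1) S'(1) subspace_inter by auto
  have "dim (K \<inter> S) \<le> 3"
    using dim_subset[OF S'(2), of "K \<inter> S"] S'(3) by auto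
  then consider "dim (K \<inter> S) = 3" | "dim (K \<inter> S) = 2" | "dim (K \<inter> S) = 1" | "dim (K \<inter> S) = 0"
    by linarith
  then show ?thesis
  proof cases
    case 1
    then have "K \<inter> S = S"
      using subspace_eq_if_dim_le[OF S'(2) KS(1)] S'(3) by auto
    then have "S \<in> Gr scale K 2"
      using S by (auto simp: mem_Gr_iff)
    then obtain T where "T \<in> B_K" "T \<subseteq> S"
      using BK by (auto simp: blocking_set_def)
    then show ?thesis
      by blast
  next
    case 2
    then have "K \<inter> S \<in> Gr scale K 1"
      using KS by (simp add: mem_Gr_iff)
    then show ?thesis
      using plane_meeting_in_line_contains_line[OF S _ hyp] by blast
  next
    case 3
    then have P: "K \<inter> S \<in> Gr scale K 0"
      using KS by (simp add: mem_Gr_iff)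
    then obtain T where "T \<in> B_XP (K \<inter> S) - qGr scale K (K \<inter> S) 0" "T \<subseteq> S"
      using plane_meeting_in_point_contains_line[OF K S P] BXP by blast
    with P show ?thesis
      by blast
  next
    case 4
    then obtain T where "T \<in> Gr scale X 1" "join scale K T \<in> B_XK" "T \<subseteq> S"
      using skew_plane_contains_line[OF K S _ BXK] by blast
    then show ?thesis
      by blast
  qed
qed

lemma blocking_set_construction:
  assumes K: "subspace K" "K \<subseteq> X"
    and BK: "blocking_set (Gr scale K) 2 1 B_K"
    and BXK: "blocking_set (qGr scale X K) 2 1 B_XK"
    and BXP: "\<forall>P \<in> Gr scale K 0. blocking_set (qGr scale X P) 1 0 (B_XP P)"
    and hyp: "\<forall>L \<in> Gr scale K 1 - B_K. \<forall>S \<in> Gr scale X 2. K \<inter> S = L \<longrightarrow>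
               (\<exists>T \<in> (\<Union>P \<in> Gr scale L 0. B_XP P - qGr scale K P 0). T \<subseteq> S)"
  shows "blocking_set (Gr scale X) 2 1
           ({T \<in> Gr scale X 1. join scale K T \<in> B_XK} \<union>
            (\<Union>P \<in> Gr scale K 0. B_XP P - qGr scale K P 0) \<union> B_K)"
  unfolding blocking_set_def
proof (intro conjI ballI)
  show "{T \<in> Gr scale X 1. join scale K T \<in> B_XK} \<union>
      (\<Union>P \<in> Gr scale K 0. B_XP P - qGr scale K P 0) \<union> B_K \<subseteq> Gr scale X 1"
    by (rule blocking_set_construction_subset[OF K(2) BK BXP])
qed (rule plane_contains_construction_line[OF K _ BK BXK BXP hyp])

lemma blocking_set_construction_disjoint:
  assumes K: "subspace K" "K \<subseteq> X"
    and BK: "blocking_set (Gr scale K) 2 1 B_K"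
    and BXK: "blocking_set (qGr scale X K) 2 1 B_XK"
    and BXP: "\<forall>P \<in> Gr scale K 0. blocking_set (qGr scale X P) 1 0 (B_XP P)"
  shows "{T \<in> Gr scale X 1. join scale K T \<in> B_XK} \<inter> (\<Union>P \<in> Gr scale K 0. B_XP P - qGr scale K P 0) = {}"
    and "{T \<in> Gr scale X 1. join scale K T \<in> B_XK} \<inter> B_K = {}"
    and "(\<Union>P \<in> Gr scale K 0. B_XP P - qGr scale K P 0) \<inter> B_K = {}"
    and "\<forall>P \<in> Gr scale K 0. \<forall>Q \<in> Gr scale K 0. P \<noteq> Q \<longrightarrow>
           (B_XP P - qGr scale K P 0) \<inter> (B_XP Q - qGr scale K Q 0) = {}"
proof -
  let ?B1 = "{T \<in> Gr scale X 1. join scale K T \<in> B_XK}"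
  let ?B2 = "\<lambda>P. B_XP P - qGr scale K P 0"
  have skew: "dim (K \<inter> T) = 0" if "T \<in> ?B1" for T
    using that BXK dim_Int_eq_0_if_join_qGr[OF K] by (auto simp: blocking_set_def)
  have point: "K \<inter> T = P" "dim P = 1" if "P \<in> Gr scale K 0" "T \<in> ?B2 P" for P T
  proof -
    have "T \<in> qGr scale X P 0 - qGr scale K P 0"
      using that BXP by (auto simp: blocking_set_def)
    then show "K \<inter> T = P"
      by (rule Int_eq_point_if_qGr_diff[OF K that(1)])
    show "dim P = 1"
      using that(1) by (simp add: mem_Gr_iff)
  qed
  have line: "K \<inter> T = T" "dim T = 2" if "T \<in> B_K" for T
  proof -
    have "T \<in> Gr scale K 1"
      using that BK by (auto simp: blocking_set_def)
    then show "K \<inter> T = T" "dim T = 2"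
      by (auto simp: mem_Gr_iff)
  qed
  show "?B1 \<inter> (\<Union>P \<in> Gr scale K 0. ?B2 P) = {}"
    using skew point by fastforce
  show "?B1 \<inter> B_K = {}"
    using skew line by fastforce
  show "(\<Union>P \<in> Gr scale K 0. ?B2 P) \<inter> B_K = {}"
    using point line by fastforce
  show "\<forall>P \<in> Gr scale K 0. \<forall>Q \<in> Gr scale K 0. P \<noteq> Q \<longrightarrow> ?B2 P \<inter> ?B2 Q = {}"
    using point by blast
qed

end

theorem proposition3p19:
  fixes scale :: "'a::field \<Rightarrow> 'v::ab_group_add \<Rightarrow> 'v"
    and X K :: "'v set" and n k :: int
    and B_K B_XK :: "'v set set" and B_XP :: "'v set \<Rightarrow> 'v set set"
  assumes vs: "vector_space scale"
    and X: "module.subspace scale X" "pdim scale X = n"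
    and K: "K \<in> Gr scale X k" and k: "-1 \<le> k" "k \<le> n - 3"
    and BK: "blocking_set (Gr scale K) 2 1 B_K"
    and BXK: "blocking_set (qGr scale X K) 2 1 B_XK"
    and BXP: "\<forall>P \<in> Gr scale K 0. blocking_set (qGr scale X P) 1 0 (B_XP P)"
    and hyp: "\<forall>L \<in> Gr scale K 1 - B_K. \<forall>S \<in> Gr scale X 2. K \<inter> S = L \<longrightarrow>
               (\<exists>T \<in> (\<Union>P \<in> Gr scale L 0. B_XP P - qGr scale K P 0). T \<subseteq> S)"
  shows "let B1 = {T \<in> Gr scale X 1. join scale K T \<in> B_XK};
             B2 = (\<Union>P \<in> Gr scale K 0. B_XP P - qGr scale K P 0)
         in B1 \<inter> B2 = {} \<and> B1 \<inter> B_K = {} \<and> B2 \<inter> B_K = {}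
            \<and> (\<forall>P \<in> Gr scale K 0. \<forall>Q \<in> Gr scale K 0. P \<noteq> Q \<longrightarrow>
                 (B_XP P - qGr scale K P 0) \<inter> (B_XP Q - qGr scale K Q 0) = {})
            \<and> blocking_set (Gr scale X) 2 1 (B1 \<union> B2 \<union> B_K)"
proof -
  interpret vector_space scale
    by (rule vs)
  have K': "subspace K" "K \<subseteq> X"
    using K by (simp_all add: mem_Gr_iff)
  txt \<open>The bounds on k matter only through n \<ge> 2, which makes X finite-dimensional.\<close>
  have "dim X \<noteq> 0"
    using X(2) k by (simp add: pdim_def)
  then interpret projective_space scale X
    using X(1) finite_span_if_dim_neq_0 by unfold_locales
  show ?thesis
    using blocking_set_construction_disjoint[OF K' BK BXK BXP]
      blocking_set_construction[OF K' BK BXK BXP hyp]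
    by (simp add: Let_def)
qed

end
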